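(* Let $R_1,\dots,R_K$ be consolidated payoff matrices of $N$-player zero-sum polymatrix games sharing the same players $[N]$, edge set $E$ and action sets $[d_i]$. If a strategy profile $x^*=(x^{1*},\dots,x^{N*})$ is an ex-post equilibrium with respect to the uncertainty set $\{R_1,\dots,R_K\}$, then $x^*$ is an ex-post equilibrium with respect to the uncertainty set $\mathrm{conv}\{R_1,\dots,R_K\}$.
   Context: An $N$-player polymatrix game consists of players $[N]$, a set $E$ of unordered pairs $[i,j]$ of distinct players, finite action sets $[d_i]$, and for each $[i,j]\in E$ payoff matrices $A^{ij}\in\mathbb{R}^{d_i\times d_j}$, $A^{ji}\in\mathbb{R}^{d_j\times d_i}$. Player $i$ chooses $x^i\in\Delta_{d_i}=\{x\in\mathbb{R}^{d_i}:x\ge0,\ \mathbf{1}^Tx=1\}$ and receives $p_i=\sum_{j:[i,j]\in E}(x^i)^TA^{ij}x^j$; the game is zero-sum if $\sum_ip_i=0$ for all pure strategy profiles. The consolidated payoff matrix $R\in\mathbb{R}^{D\times D}$, $D=\sum_id_i$, has rows/columns indexed by $(i:a_i)$ with $R_{(i:a_i),(j:a_j)}=A^{ij}_{a_ia_j}$ if $[i,j]\in E$ and $0$ otherwise. A profile $x^*$ is an ex-post equilibrium with respect to a set $\mathcal{U}$ of such matrices if for every player $i$ and every $R\in\mathcal{U}$ (with blocks $A^{ij}$), $x^{i*}\in\arg\max_{x^i\in\Delta_{d_i}}\sum_{j:[i,j]\in E}(x^i)^TA^{ij}x^{j*}$. *)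

theory Defs
  imports "HOL-Analysis.Analysis"
begin

text \<open>Players are 0..<N, actions of player i are 0..<d i.  A consolidated
payoff matrix R (of size D x D, D = sum of the d i) is represented as a function
R i a j b = R_{(i:a),(j:b)}.\<close>

type_synonym cmat = "nat \<Rightarrow> nat \<Rightarrow> nat \<Rightarrow> nat \<Rightarrow> real"

definition valid_edges :: "nat \<Rightarrow> nat set set \<Rightarrow> bool" where
  "valid_edges N E \<longleftrightarrow> (\<forall>e\<in>E. \<exists>i j. e = {i, j} \<and> i \<noteq> j \<and> i < N \<and> j < N)"

definition consolidated :: "nat \<Rightarrow> nat set set \<Rightarrow> (nat \<Rightarrow> nat) \<Rightarrow> cmat \<Rightarrow> bool" where
  "consolidated N E d R \<longleftrightarrow>
     (\<forall>i a j b. R i a j b \<noteq> 0 \<longrightarrow> i < N \<and> j < N \<and> a < d i \<and> b < d j \<and> {i, j} \<in> E)"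

definition neighbours :: "nat \<Rightarrow> nat set set \<Rightarrow> nat \<Rightarrow> nat set" where
  "neighbours N E i = {j. j < N \<and> {i, j} \<in> E}"

definition payoff :: "nat \<Rightarrow> nat set set \<Rightarrow> (nat \<Rightarrow> nat) \<Rightarrow> cmat \<Rightarrow> nat
                      \<Rightarrow> (nat \<Rightarrow> real) \<Rightarrow> (nat \<Rightarrow> nat \<Rightarrow> real) \<Rightarrow> real" where
  "payoff N E d R i y x =
     (\<Sum>j\<in>neighbours N E i. \<Sum>a<d i. \<Sum>b<d j. y a * R i a j b * x j b)"

definition zero_sum :: "nat \<Rightarrow> nat set set \<Rightarrow> (nat \<Rightarrow> nat) \<Rightarrow> cmat \<Rightarrow> bool" where
  "zero_sum N E d R \<longleftrightarrow>
     (\<forall>s::nat \<Rightarrow> nat. (\<forall>i<N. s i < d i) \<longrightarrow>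
        (\<Sum>i<N. \<Sum>j\<in>neighbours N E i. R i (s i) j (s j)) = 0)"

text \<open>The probability simplex over actions 0..<n (coordinates >= n are irrelevant).\<close>
definition in_simplex :: "nat \<Rightarrow> (nat \<Rightarrow> real) \<Rightarrow> bool" where
  "in_simplex n y \<longleftrightarrow> (\<forall>a<n. 0 \<le> y a) \<and> (\<Sum>a<n. y a) = 1"

definition ex_post_eq :: "nat \<Rightarrow> nat set set \<Rightarrow> (nat \<Rightarrow> nat) \<Rightarrow> cmat set
                         \<Rightarrow> (nat \<Rightarrow> nat \<Rightarrow> real) \<Rightarrow> bool" where
  "ex_post_eq N E d U x \<longleftrightarrow>
     (\<forall>i<N. in_simplex (d i) (x i)) \<and>
     (\<forall>i<N. \<forall>R\<in>U.
        (\<forall>y. in_simplex (d i) y \<longrightarrow> payoff N E d R i y x \<le> payoff N E d R i (x i) x))"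

text \<open>Convex hull of a finite set of matrices: all convex combinations
(matrices are functions, not a library real vector space type).\<close>
definition mconv :: "cmat set \<Rightarrow> cmat set" where
  "mconv S = {R. \<exists>\<mu>::cmat \<Rightarrow> real. (\<forall>M\<in>S. 0 \<le> \<mu> M) \<and> (\<Sum>M\<in>S. \<mu> M) = 1 \<and>
                  R = (\<lambda>i a j b. \<Sum>M\<in>S. \<mu> M * M i a j b)}"

end

theory Submission
  imports Defs
begin

(* A player's payoff is linear in the payoff matrix, so the best-response inequalities
   for R_1, ..., R_K survive taking convex combinations of the matrices. *)

lemma payoff_linear_combination:
  "payoff N E d (\<lambda>i a j b. \<Sum>M\<in>S. \<mu> M * M i a j b) i y x
   = (\<Sum>M\<in>S. \<mu> M * payoff N E d M i y x)"
proof -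
  have "payoff N E d (\<lambda>i a j b. \<Sum>M\<in>S. \<mu> M * M i a j b) i y x
     = (\<Sum>j\<in>neighbours N E i. \<Sum>a<d i. \<Sum>b<d j. \<Sum>M\<in>S. \<mu> M * (y a * M i a j b * x j b))"
    unfolding payoff_def
    by (simp add: sum_distrib_left sum_distrib_right mult.assoc mult.left_commute)
  also have "\<dots> = (\<Sum>M\<in>S. \<Sum>j\<in>neighbours N E i. \<Sum>a<d i. \<Sum>b<d j. \<mu> M * (y a * M i a j b * x j b))"
    by (simp add: sum.swap[of _ S])
  also have "\<dots> = (\<Sum>M\<in>S. \<mu> M * payoff N E d M i y x)"
    unfolding payoff_def by (simp add: sum_distrib_left)
  finally show ?thesis .
qed

lemma payoff_le_nonneg_combination:
  assumes "\<forall>M\<in>S. 0 \<le> \<mu> M"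
    and "\<forall>M\<in>S. payoff N E d M i y x \<le> payoff N E d M i z x"
  shows "payoff N E d (\<lambda>i a j b. \<Sum>M\<in>S. \<mu> M * M i a j b) i y x
       \<le> payoff N E d (\<lambda>i a j b. \<Sum>M\<in>S. \<mu> M * M i a j b) i z x"
proof -
  have "(\<Sum>M\<in>S. \<mu> M * payoff N E d M i y x) \<le> (\<Sum>M\<in>S. \<mu> M * payoff N E d M i z x)"
    by (rule sum_mono) (simp add: assms mult_left_mono)
  then show ?thesis
    by (simp only: payoff_linear_combination)
qed

lemma ex_post_eq_mconv:
  assumes "ex_post_eq N E d S x"
  shows "ex_post_eq N E d (mconv S) x"
  unfolding ex_post_eq_def
proof (intro conjI allI impI ballI)
  show "in_simplex (d i) (x i)" if "i < N" for i
    using assms that unfolding ex_post_eq_def by blast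
next
  fix i R y
  assume i: "i < N" and R: "R \<in> mconv S" and y: "in_simplex (d i) y"
  obtain \<mu> where \<mu>_nonneg: "\<forall>M\<in>S. 0 \<le> \<mu> M"
    and R_eq: "R = (\<lambda>i a j b. \<Sum>M\<in>S. \<mu> M * M i a j b)"
    using R unfolding mconv_def by blast
  have "\<forall>M\<in>S. payoff N E d M i y x \<le> payoff N E d M i (x i) x"
    using assms i y unfolding ex_post_eq_def by blast
  then show "payoff N E d R i y x \<le> payoff N E d R i (x i) x"
    unfolding R_eq using \<mu>_nonneg by (rule payoff_le_nonneg_combination[rotated])
qed

theorem lemma2:
  fixes N K :: nat and E :: "nat set set" and d :: "nat \<Rightarrow> nat"
    and Rs :: "nat \<Rightarrow> cmat" and x :: "nat \<Rightarrow> nat \<Rightarrow> real"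
  assumes "valid_edges N E"
    and "\<forall>i<N. 0 < d i"
    and "\<forall>k<K. consolidated N E d (Rs k) \<and> zero_sum N E d (Rs k)"
    and "ex_post_eq N E d (Rs ` {..<K}) x"
  shows "ex_post_eq N E d (mconv (Rs ` {..<K})) x"
  using assms(4) by (rule ex_post_eq_mconv)

end
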